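(* Let $G$ be a graph with nonnegative edge costs, distinguished vertices $start$ and $goal$, and let $C^*$ be the cost of a cheapest $start$–$goal$ path. Let $h_F, h_B$ be nonnegative front-to-end heuristics that are admissible and consistent. Fix $W \ge 1$ and a real $\lambda \le W$. Then the algorithm WBAE* (described in the context) is bounded-suboptimal: whenever it returns a solution, its cost is at most $W\cdot C^*$.
   Context: $c(x,y)$ is the cheapest path cost from $x$ to $y$. $h_F(s)$ estimates $c(s,goal)$, $h_B(s)$ estimates $c(start,s)$; admissibility means $h_F(s)\le c(s,goal)$, $h_B(s)\le c(start,s)$ for all $s$; consistency means $h_F(s)\le c(s,s')+h_F(s')$ and $h_B(s')\le c(s,s')+h_B(s)$ for all $s,s'$. WBAE* is a bidirectional best-first search: a forward search from $start$ with open list $\mathrm{OPEN}_F$ and $g_F$-values (costs of discovered paths from $start$), and a backward search from $goal$ with open list $\mathrm{OPEN}_B$ and $g_B$-values (costs of discovered paths to $goal$). For direction $D$ with opposite $\bar D$, a node $n$ in $\mathrm{OPEN}_D$ has priority $b_{W_D}(n) = g_D(n) + W\cdot h_D(n) + \lambda\,(g_D(n) - h_{\bar D}(n))$. An incumbent solution cost $U$ (initially $\infty$) is updated whenever a generated node is matched with the opposite frontier, giving a $start$–$goal$ path of cost lower than $U$. In each iteration a direction $D$ is chosen (e.g. alternating), a node with minimal $b_{W_D}$ in $\mathrm{OPEN}_D$ is expanded, and the lower bound $LB_{WB} = (b_W\mathrm{Min}_F + b_W\mathrm{Min}_B)/2$ is recomputed, where $b_W\mathrm{Min}_D$ is the minimal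 $b_{W_D}$-value in $\mathrm{OPEN}_D$. The algorithm terminates and returns $U$ once $U \le LB_{WB}$ (with $U$ the cost of a path found through a state on both frontiers). *)

theory Defs
  imports Main "HOL-Library.Extended_Real"
begin

definition is_path :: "('v \<times> 'v) set \<Rightarrow> 'v \<Rightarrow> 'v list \<Rightarrow> 'v \<Rightarrow> bool" where
  "is_path E x p y \<longleftrightarrow> p \<noteq> [] \<and> hd p = x \<and> last p = y \<and>
     (\<forall>i. Suc i < length p \<longrightarrow> (p ! i, p ! Suc i) \<in> E)"

definition path_cost :: "('v \<Rightarrow> 'v \<Rightarrow> real) \<Rightarrow> 'v list \<Rightarrow> real" where
  "path_cost w p = (\<Sum>i < length p - 1. w (p ! i) (p ! Suc i))"

definition cheapest :: "('v \<times> 'v) set \<Rightarrow> ('v \<Rightarrow> 'v \<Rightarrow> real) \<Rightarrow> 'v \<Rightarrow> 'v \<Rightarrow> ereal" where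
  "cheapest E w x y = Inf {ereal (path_cost w p) | p. is_path E x p y}"

text \<open>Directions: True = forward (F), False = backward (B).\<close>

record 'v sstate =
  opn :: "bool \<Rightarrow> 'v set"
  cls :: "bool \<Rightarrow> 'v set"
  gv  :: "bool \<Rightarrow> 'v \<Rightarrow> real" \<comment> \<open>g_D (meaningful on OPEN_D \<union> CLOSED_D)\<close>
  ub  :: ereal

definition succs :: "('v \<times> 'v) set \<Rightarrow> bool \<Rightarrow> 'v \<Rightarrow> 'v set" where
  "succs E D n = (if D then {m. (n, m) \<in> E} else {m. (m, n) \<in> E})"

definition ecost :: "('v \<Rightarrow> 'v \<Rightarrow> real) \<Rightarrow> bool \<Rightarrow> 'v \<Rightarrow> 'v \<Rightarrow> real" where
  "ecost w D n m = (if D then w n m else w m n)"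

definition hD :: "('v \<Rightarrow> real) \<Rightarrow> ('v \<Rightarrow> real) \<Rightarrow> bool \<Rightarrow> 'v \<Rightarrow> real" where
  "hD hF hB D = (if D then hF else hB)"

definition bW :: "('v \<Rightarrow> real) \<Rightarrow> ('v \<Rightarrow> real) \<Rightarrow> real \<Rightarrow> real \<Rightarrow> bool \<Rightarrow> 'v sstate \<Rightarrow> 'v \<Rightarrow> real" where
  "bW hF hB W lam D s n =
     gv s D n + W * hD hF hB D n + lam * (gv s D n - hD hF hB (\<not> D) n)"

definition bWMin :: "('v \<Rightarrow> real) \<Rightarrow> ('v \<Rightarrow> real) \<Rightarrow> real \<Rightarrow> real \<Rightarrow> bool \<Rightarrow> 'v sstate \<Rightarrow> ereal" where
  "bWMin hF hB W lam D s = Inf ((\<lambda>n. ereal (bW hF hB W lam D s n)) ` opn s D)"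

definition LB :: "('v \<Rightarrow> real) \<Rightarrow> ('v \<Rightarrow> real) \<Rightarrow> real \<Rightarrow> real \<Rightarrow> 'v sstate \<Rightarrow> ereal" where
  "LB hF hB W lam s = (bWMin hF hB W lam True s + bWMin hF hB W lam False s) / 2"

text \<open>Initial state: start and goal are generated (and matched if they coincide).\<close>
definition init :: "'v \<Rightarrow> 'v \<Rightarrow> 'v sstate" where
  "init start goal =
     \<lparr> opn = (\<lambda>D. if D then {start} else {goal}),
       cls = (\<lambda>D. {}),
       gv = (\<lambda>D v. 0),
       ub = (if start = goal then 0 else \<infinity>) \<rparr>"

definition expand :: "('v \<times> 'v) set \<Rightarrow> ('v \<Rightarrow> 'v \<Rightarrow> real) \<Rightarrow> bool \<Rightarrow> 'v \<Rightarrow> 'v sstate \<Rightarrow> 'v sstate" where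
  "expand E w D n s =
    (let I = {m \<in> succs E D n. m \<notin> opn s D \<union> cls s D \<or> gv s D n + ecost w D n m < gv s D m};
         g' = (\<lambda>m. if m \<in> I then gv s D n + ecost w D n m else gv s D m)
     in s\<lparr> opn := (opn s)(D := (opn s D - {n}) \<union> I),
           cls := (cls s)(D := (cls s D \<union> {n}) - I),
           gv := (gv s)(D := g'),
           ub := min (ub s)
                   (Inf {ereal (g' m + gv s (\<not> D) m) | m. m \<in> succs E D n \<and> m \<in> opn s (\<not> D)}) \<rparr>)"

definition wbae_step :: "('v \<times> 'v) set \<Rightarrow> ('v \<Rightarrow> 'v \<Rightarrow> real) \<Rightarrow> ('v \<Rightarrow> real) \<Rightarrow> ('v \<Rightarrow> real)
    \<Rightarrow> real \<Rightarrow> real \<Rightarrow> 'v sstate \<Rightarrow> 'v sstate \<Rightarrow> bool" where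
  "wbae_step E w hF hB W lam s s' \<longleftrightarrow>
     LB hF hB W lam s < ub s \<and>
     (\<exists>D n. n \<in> opn s D \<and> (\<forall>n' \<in> opn s D. bW hF hB W lam D s n \<le> bW hF hB W lam D s n') \<and>
            s' = expand E w D n s)"

end

theory Submission
  imports Defs
begin

(*
  Along every run, for both directions D: each edge leaving a node of CLOSED_D
  is relaxed, the root of D is generated with g_D = 0, g_D(v) >= h_D'(v) for the
  opposite direction D' (consistency along edges), and U <= g_F(v) + g_B(v) for
  every v generated in both directions.

  Fix a start-goal path p_0 ... p_N. Let p_j be the first node not closed forward
  (j = N if there is none) and p_k the last one not closed backward (k = 0 if
  there is none); relaxation gives g_F(p_j) <= cost(p_0..p_j) and
  g_B(p_k) <= cost(p_k..p_N). If k <= j, then p_j is generated in both directions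
  and U <= cost(p). Otherwise p_j is in OPEN_F and p_k in OPEN_B, and consistency
  together with 1 <= W and lam <= W gives b_W_F(p_j) + b_W_B(p_k) <= 2 W cost(p),
  so on termination U <= LB_WB <= W cost(p).
*)

lemma cheapest_le_path_cost: "is_path E x p y \<Longrightarrow> cheapest E w x y \<le> ereal (path_cost w p)"
  unfolding cheapest_def by (rule Inf_lower) blast

lemma cheapest_edge_le: "(x, y) \<in> E \<Longrightarrow> cheapest E w x y \<le> ereal (w x y)"
  using cheapest_le_path_cost[of E x "[x, y]" y w]
  by (simp add: is_path_def path_cost_def nth_Cons split: nat.splits)

lemma cheapest_self_le: "cheapest E w x x \<le> 0"
  using cheapest_le_path_cost[of E x "[x]" x w] by (simp add: is_path_def path_cost_def zero_ereal_def)

lemma edge_le_of_cheapest_le: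
  assumes "ereal a \<le> cheapest E w x y + ereal b" and "(x, y) \<in> E"
  shows "a \<le> w x y + b"
proof -
  have "ereal a \<le> ereal (w x y) + ereal b"
    using assms(1) add_right_mono[OF cheapest_edge_le[OF assms(2)]] by (rule order_trans)
  then show ?thesis by simp
qed

lemma nonpos_of_le_cheapest_self: "ereal a \<le> cheapest E w x x \<Longrightarrow> a \<le> 0"
proof -
  assume "ereal a \<le> cheapest E w x x"
  then have "ereal a \<le> 0" using cheapest_self_le by (rule order_trans)
  then show ?thesis by (simp add: zero_ereal_def)
qed

lemma is_path_edge: "is_path E x p y \<Longrightarrow> Suc l < length p \<Longrightarrow> (p ! l, p ! Suc l) \<in> E"
  by (simp add: is_path_def)

definition segment_cost :: "('v \<Rightarrow> 'v \<Rightarrow> real) \<Rightarrow> 'v list \<Rightarrow> nat \<Rightarrow> nat \<Rightarrow> real" where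
  "segment_cost w p i k = (\<Sum>l = i..<k. w (p ! l) (p ! Suc l))"

lemma path_cost_eq_segment_cost: "path_cost w p = segment_cost w p 0 (length p - 1)"
  by (simp add: path_cost_def segment_cost_def atLeast0LessThan)

lemma segment_cost_concat:
  "i \<le> j \<Longrightarrow> j \<le> k \<Longrightarrow> segment_cost w p i j + segment_cost w p j k = segment_cost w p i k"
  by (simp add: segment_cost_def sum.atLeastLessThan_concat)

lemma segment_cost_Suc_right:
  "i \<le> k \<Longrightarrow> segment_cost w p i (Suc k) = segment_cost w p i k + w (p ! k) (p ! Suc k)"
  by (simp add: segment_cost_def)

lemma segment_cost_Suc_left:
  "i < k \<Longrightarrow> segment_cost w p i k = w (p ! i) (p ! Suc i) + segment_cost w p (Suc i) k"
  by (simp add: segment_cost_def sum.atLeast_Suc_lessThan)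

lemma potential_le_segment_cost:
  fixes f :: "'v \<Rightarrow> real"
  assumes "i \<le> k"
    and "\<And>l. i \<le> l \<Longrightarrow> l < k \<Longrightarrow> f (p ! l) \<le> w (p ! l) (p ! Suc l) + f (p ! Suc l)"
  shows "f (p ! i) \<le> segment_cost w p i k + f (p ! k)"
  using assms(1)
proof (induction k rule: dec_induct)
  case base
  then show ?case by (simp add: segment_cost_def)
next
  case (step l)
  then show ?case using assms(2)[of l] by (simp add: segment_cost_Suc_right)
qed

lemma ex_greatest_nat_le:
  "P (0::nat) \<Longrightarrow> \<exists>k\<le>n. P k \<and> (\<forall>i. k < i \<and> i \<le> n \<longrightarrow> \<not> P i)"
proof (induction n)
  case (Suc n)
  show ?case
  proof (cases "P (Suc n)")
    case True
    then show ?thesis by auto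
  next
    case False
    with Suc obtain k where "k \<le> n" "P k" "\<forall>i. k < i \<and> i \<le> n \<longrightarrow> \<not> P i" by blast
    with False show ?thesis by (metis le_Suc_eq le_SucI)
  qed
qed simp

(* a, b, e: costs of the path before p_j, between p_j and p_k, and after p_k. *)
lemma priority_sum_le:
  fixes gF gB hFj hBj hFk hBk a b e W lam :: real
  assumes "hBj \<le> gF" "gF \<le> a" "hFk \<le> gB" "gB \<le> e"
    and "hFj \<le> b + hFk" "hBk \<le> b + hBj"
    and "0 \<le> hFk" "0 \<le> hBj" "1 \<le> W" "lam \<le> W"
  shows "(gF + W * hFj + lam * (gF - hBj)) + (gB + W * hBk + lam * (gB - hFk)) \<le> 2 * W * (a + b + e)"
proof -
  define X Y where "X = a + e" and "Y = hFk + hBj"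
  have Y: "0 \<le> Y" "Y \<le> gF + gB" and X: "gF + gB \<le> X"
    using assms by (simp_all add: X_def Y_def)
  have heuristics: "W * (hFj + hBk) \<le> W * (2 * b + Y)"
    using assms by (intro mult_left_mono) (simp_all add: Y_def)
  have lam_term: "lam * (gF + gB - Y) \<le> W * (X - Y)"
  proof (cases "0 \<le> lam")
    case True
    have "lam * (gF + gB - Y) \<le> lam * (X - Y)"
      using True X by (intro mult_left_mono) simp_all
    also have "\<dots> \<le> W * (X - Y)"
      using assms(10) X Y by (intro mult_right_mono) simp_all
    finally show ?thesis .
  next
    case False
    then have "lam * (gF + gB - Y) \<le> 0" using Y by (intro mult_nonpos_nonneg) simp_all
    also have "0 \<le> W * (X - Y)" using assms(9) X Y by simp
    finally show ?thesis .
  qed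
  have "1 * X \<le> W * X" using assms(9) X Y by (intro mult_right_mono) simp_all
  with heuristics lam_term X show ?thesis by (simp add: X_def Y_def algebra_simps)
qed

abbreviation generated :: "'v sstate \<Rightarrow> bool \<Rightarrow> 'v set" where
  "generated s D \<equiv> opn s D \<union> cls s D"

definition improved ::
    "('v \<times> 'v) set \<Rightarrow> ('v \<Rightarrow> 'v \<Rightarrow> real) \<Rightarrow> bool \<Rightarrow> 'v \<Rightarrow> 'v sstate \<Rightarrow> 'v set" where
  "improved E w D n s =
     {m \<in> succs E D n. m \<notin> generated s D \<or> gv s D n + ecost w D n m < gv s D m}"

lemma opn_expand:
  "opn (expand E w D n s) D' =
     (if D' = D then opn s D - {n} \<union> improved E w D n s else opn s D')"
  by (simp add: expand_def improved_def Let_def)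

lemma cls_expand:
  "cls (expand E w D n s) D' =
     (if D' = D then cls s D \<union> {n} - improved E w D n s else cls s D')"
  by (simp add: expand_def improved_def Let_def)

lemma gv_expand:
  "gv (expand E w D n s) D' m =
     (if D' = D \<and> m \<in> improved E w D n s then gv s D n + ecost w D n m else gv s D' m)"
  by (auto simp: expand_def improved_def Let_def)

lemma ub_expand:
  "ub (expand E w D n s) = min (ub s)
     (Inf {ereal (gv (expand E w D n s) D m + gv s (\<not> D) m) | m. m \<in> succs E D n \<and> m \<in> opn s (\<not> D)})"
  by (simp add: expand_def improved_def Let_def)

lemma ub_expand_le: "ub (expand E w D n s) \<le> ub s"
  by (simp add: ub_expand)

lemma ub_expand_le_meeting:
  assumes "m \<in> succs E D n" and "m \<in> opn s (\<not> D)"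
  shows "ub (expand E w D n s) \<le> ereal (gv (expand E w D n s) D m + gv s (\<not> D) m)"
  unfolding ub_expand using assms by (intro min.coboundedI2 Inf_lower) blast

lemma generated_expand:
  "n \<in> opn s D \<Longrightarrow> generated (expand E w D n s) D = generated s D \<union> improved E w D n s"
  by (auto simp: opn_expand cls_expand)

lemma generated_expand_opposite: "generated (expand E w D n s) (\<not> D) = generated s (\<not> D)"
  by (simp add: opn_expand cls_expand)

lemma gv_expand_opposite: "gv (expand E w D n s) (\<not> D) = gv s (\<not> D)"
  by (simp add: gv_expand fun_eq_iff)

lemma gv_expand_le: "m \<in> generated s D \<Longrightarrow> gv (expand E w D n s) D m \<le> gv s D m"
  by (auto simp: gv_expand improved_def)

lemma succs_opposite: "m \<in> succs E D n \<longleftrightarrow> n \<in> succs E (\<not> D) m"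
  by (simp add: succs_def)

lemma ecost_opposite: "ecost w (\<not> D) m n = ecost w D n m"
  by (simp add: ecost_def)

lemma LB_le_open_pair:
  assumes "n \<in> opn s True" and "m \<in> opn s False"
  shows "LB hF hB W lam s \<le> ereal ((bW hF hB W lam True s n + bW hF hB W lam False s m) / 2)"
proof -
  have "bWMin hF hB W lam True s \<le> ereal (bW hF hB W lam True s n)"
    "bWMin hF hB W lam False s \<le> ereal (bW hF hB W lam False s m)"
    unfolding bWMin_def using assms by (auto intro: INF_lower)
  then have "LB hF hB W lam s \<le> (ereal (bW hF hB W lam True s n) + ereal (bW hF hB W lam False s m)) / 2"
    unfolding LB_def by (intro ereal_divide_right_mono add_mono) auto
  then show ?thesis by simp
qed

(* Consistency is only needed along single edges, and admissibility only at the
   roots: h_F(goal) <= 0 and h_B(start) <= 0. *)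
locale wbae_problem =
  fixes E :: "('v \<times> 'v) set" and w :: "'v \<Rightarrow> 'v \<Rightarrow> real"
    and hF hB :: "'v \<Rightarrow> real" and start goal :: 'v
  assumes w_nonneg: "(x, y) \<in> E \<Longrightarrow> 0 \<le> w x y"
    and hF_nonneg: "0 \<le> hF v" and hB_nonneg: "0 \<le> hB v"
    and hF_edge: "(x, y) \<in> E \<Longrightarrow> hF x \<le> w x y + hF y"
    and hB_edge: "(x, y) \<in> E \<Longrightarrow> hB y \<le> w x y + hB x"
    and hF_goal: "hF goal \<le> 0" and hB_start: "hB start \<le> 0"
begin

definition root :: "bool \<Rightarrow> 'v" where
  "root D = (if D then start else goal)"

definition closed_relaxed :: "'v sstate \<Rightarrow> bool" where
  "closed_relaxed s \<longleftrightarrow> (\<forall>D. \<forall>v \<in> cls s D. \<forall>m \<in> succs E D v.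
     m \<in> generated s D \<and> gv s D m \<le> gv s D v + ecost w D v m)"

definition roots_generated :: "'v sstate \<Rightarrow> bool" where
  "roots_generated s \<longleftrightarrow> (\<forall>D. root D \<in> generated s D \<and> gv s D (root D) \<le> 0)"

definition g_ge_opposite_h :: "'v sstate \<Rightarrow> bool" where
  "g_ge_opposite_h s \<longleftrightarrow> (\<forall>D. \<forall>v \<in> generated s D. hD hF hB (\<not> D) v \<le> gv s D v)"

definition ub_le_meetings :: "'v sstate \<Rightarrow> bool" where
  "ub_le_meetings s \<longleftrightarrow> (\<forall>D. \<forall>v \<in> generated s D \<inter> generated s (\<not> D).
     ub s \<le> ereal (gv s D v + gv s (\<not> D) v))"

definition invariant :: "'v sstate \<Rightarrow> bool" where
  "invariant s \<longleftrightarrow> closed_relaxed s \<and> roots_generated s \<and> g_ge_opposite_h s \<and> ub_le_meetings s"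

lemma opposite_h_edge: "m \<in> succs E D n \<Longrightarrow> hD hF hB (\<not> D) m \<le> hD hF hB (\<not> D) n + ecost w D n m"
  by (cases D) (auto simp: succs_def ecost_def hD_def dest: hF_edge hB_edge)

lemma invariant_init: "invariant (init start goal)"
  using hF_goal hB_start
  by (auto simp: invariant_def closed_relaxed_def roots_generated_def g_ge_opposite_h_def
      ub_le_meetings_def init_def root_def hD_def)

lemma closed_relaxed_expand:
  assumes inv: "closed_relaxed s" and n: "n \<in> opn s D"
  shows "closed_relaxed (expand E w D n s)"
  unfolding closed_relaxed_def
proof (intro allI ballI)
  fix D' v m
  let ?s = "expand E w D n s"
  assume v: "v \<in> cls ?s D'" and m: "m \<in> succs E D' v"
  show "m \<in> generated ?s D' \<and> gv ?s D' m \<le> gv ?s D' v + ecost w D' v m"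
  proof (cases "D' = D")
    case False
    then have "D' = (\<not> D)" by blast
    then show ?thesis
      using inv v m by (simp add: closed_relaxed_def opn_expand cls_expand gv_expand_opposite)
  next
    case True
    have v_not_improved: "v \<notin> improved E w D n s" and "v = n \<or> v \<in> cls s D"
      using v True by (auto simp: cls_expand)
    then consider "v = n" | "v \<noteq> n" "v \<in> cls s D" by blast
    then show ?thesis
    proof cases
      case 1
      then show ?thesis
        using m n True v_not_improved
        by (cases "m \<in> improved E w D n s") (auto simp: gv_expand generated_expand improved_def)
    next
      case 2
      with inv m True have "m \<in> generated s D" "gv s D m \<le> gv s D v + ecost w D v m"
        by (auto simp: closed_relaxed_def)
      then show ?thesis
        using gv_expand_le[of m s D E w n] v_not_improved True n
        by (auto simp: generated_expand gv_expand)
    qed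
  qed
qed

lemma roots_generated_expand:
  assumes "roots_generated s" and "n \<in> opn s D"
  shows "roots_generated (expand E w D n s)"
  unfolding roots_generated_def
proof
  fix D'
  show "root D' \<in> generated (expand E w D n s) D' \<and> gv (expand E w D n s) D' (root D') \<le> 0"
  proof (cases "D' = D")
    case True
    have "root D \<in> generated s D" "gv s D (root D) \<le> 0"
      using assms(1) by (auto simp: roots_generated_def)
    then show ?thesis
      using True gv_expand_le[of "root D" s D E w n] generated_expand[OF assms(2)] by auto
  next
    case False
    then have "D' = (\<not> D)" by blast
    then show ?thesis
      using assms by (simp add: roots_generated_def generated_expand_opposite gv_expand_opposite)
  qed
qed

lemma g_ge_opposite_h_expand:
  assumes inv: "g_ge_opposite_h s" and n: "n \<in> opn s D"
  shows "g_ge_opposite_h (expand E w D n s)"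
  unfolding g_ge_opposite_h_def
proof (intro allI ballI)
  fix D' v
  let ?s = "expand E w D n s"
  assume v: "v \<in> generated ?s D'"
  show "hD hF hB (\<not> D') v \<le> gv ?s D' v"
  proof (cases "D' = D \<and> v \<in> improved E w D n s")
    case True
    then have "hD hF hB (\<not> D) v \<le> hD hF hB (\<not> D) n + ecost w D n v"
      by (intro opposite_h_edge) (simp add: improved_def)
    also have "\<dots> \<le> gv s D n + ecost w D n v"
      using inv n by (simp add: g_ge_opposite_h_def)
    finally show ?thesis using True by (simp add: gv_expand)
  next
    case False
    then have "v \<in> generated s D'"
      using v n by (cases "D' = D") (auto simp: generated_expand opn_expand cls_expand)
    then show ?thesis using inv False by (auto simp: g_ge_opposite_h_def gv_expand)
  qed
qed

lemma ub_le_meetings_expand: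
  assumes relaxed: "closed_relaxed s" and meet: "ub_le_meetings s" and n: "n \<in> opn s D"
  shows "ub_le_meetings (expand E w D n s)"
proof -
  let ?s = "expand E w D n s"
  have meet_D: "ub s \<le> ereal (gv s D v + gv s (\<not> D) v)"
    if "v \<in> generated s D" "v \<in> generated s (\<not> D)" for v
    using meet that unfolding ub_le_meetings_def by blast
  have key: "ub ?s \<le> ereal (gv ?s D v + gv s (\<not> D) v)"
    if vD: "v \<in> generated ?s D" and vD': "v \<in> generated s (\<not> D)" for v
  proof (cases "v \<in> improved E w D n s")
    case False
    then have "v \<in> generated s D" "gv ?s D v = gv s D v"
      using vD n by (auto simp: generated_expand gv_expand)
    then show ?thesis using meet_D[OF _ vD'] order_trans[OF ub_expand_le] by simp
  next
    case True
    then have v_succ: "v \<in> succs E D n" and gv_v: "gv ?s D v = gv s D n + ecost w D n v"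
      by (simp_all add: improved_def gv_expand)
    show ?thesis
    proof (cases "v \<in> opn s (\<not> D)")
      case True
      then show ?thesis using ub_expand_le_meeting[OF v_succ] by blast
    next
      case False
      \<comment> \<open>The edge from \<open>v\<close> back to \<open>n\<close> was relaxed when \<open>v\<close> was closed backward,
          so the earlier meeting at \<open>n\<close> already bounds the new one at \<open>v\<close>.\<close>
      then have "v \<in> cls s (\<not> D)" using vD' by blast
      moreover have "n \<in> succs E (\<not> D) v" using succs_opposite v_succ by (rule iffD1)
      ultimately have "n \<in> generated s (\<not> D)"
        and gv_n: "gv s (\<not> D) n \<le> gv s (\<not> D) v + ecost w (\<not> D) v n"
        using relaxed unfolding closed_relaxed_def by blast+
      then have "ub s \<le> ereal (gv s D n + gv s (\<not> D) n)" using meet_D n by blast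
      also have "\<dots> \<le> ereal (gv ?s D v + gv s (\<not> D) v)"
        using gv_n gv_v ecost_opposite[of w D v n] by simp
      finally show ?thesis by (rule order_trans[OF ub_expand_le])
    qed
  qed
  show ?thesis
    unfolding ub_le_meetings_def
  proof (intro allI ballI)
    fix D' v
    assume v: "v \<in> generated ?s D' \<inter> generated ?s (\<not> D')"
    have "D' = D \<or> D' = (\<not> D)" by blast
    then show "ub ?s \<le> ereal (gv ?s D' v + gv ?s (\<not> D') v)"
    proof
      assume "D' = D"
      then show ?thesis using key[of v] v by (simp add: generated_expand_opposite gv_expand_opposite)
    next
      assume "D' = (\<not> D)"
      then show ?thesis using key[of v] v by (simp add: generated_expand_opposite gv_expand_opposite add.commute)
    qed
  qed
qed

lemma invariant_expand: "invariant s \<Longrightarrow> n \<in> opn s D \<Longrightarrow> invariant (expand E w D n s)"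
  by (simp add: invariant_def closed_relaxed_expand roots_generated_expand
      g_ge_opposite_h_expand ub_le_meetings_expand)

lemma invariant_reachable:
  assumes "(wbae_step E w hF hB W lam)\<^sup>*\<^sup>* (init start goal) s"
  shows "invariant s"
  using assms
proof (induction rule: rtranclp_induct)
  case base
  show ?case by (rule invariant_init)
next
  case (step s s')
  then show ?case by (auto simp: wbae_step_def intro: invariant_expand)
qed

lemma path_cost_nonneg: "is_path E x p y \<Longrightarrow> 0 \<le> path_cost w p"
  unfolding path_cost_def by (intro sum_nonneg w_nonneg is_path_edge) auto

lemma hF_le_segment_cost:
  "is_path E x p y \<Longrightarrow> i \<le> k \<Longrightarrow> k < length p \<Longrightarrow>
    hF (p ! i) \<le> segment_cost w p i k + hF (p ! k)"
  by (intro potential_le_segment_cost hF_edge is_path_edge) auto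

lemma hB_le_segment_cost:
  assumes "is_path E x p y" "i \<le> k" "k < length p"
  shows "hB (p ! k) \<le> segment_cost w p i k + hB (p ! i)"
proof -
  have "- hB (p ! i) \<le> segment_cost w p i k + - hB (p ! k)"
  proof (rule potential_le_segment_cost[where f = "\<lambda>v. - hB v"])
    fix l
    assume "i \<le> l" "l < k"
    then have "hB (p ! Suc l) \<le> w (p ! l) (p ! Suc l) + hB (p ! l)"
      using assms by (intro hB_edge is_path_edge) auto
    then show "- hB (p ! l) \<le> w (p ! l) (p ! Suc l) + - hB (p ! Suc l)" by simp
  qed (use assms in simp)
  then show ?thesis by simp
qed

lemma forward_prefix_bound:
  assumes relaxed: "closed_relaxed s" and roots: "roots_generated s"
    and p: "is_path E start p y" and "i < length p" and "\<forall>l<i. p ! l \<in> cls s True"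
  shows "p ! i \<in> generated s True \<and> gv s True (p ! i) \<le> segment_cost w p 0 i"
  using assms(4,5)
proof (induction i)
  case 0
  have "p ! 0 = start" using p by (metis is_path_def hd_conv_nth)
  then show ?case
    using roots[unfolded roots_generated_def, THEN spec, of True]
    by (simp add: root_def segment_cost_def)
next
  case (Suc i)
  then have "p ! i \<in> cls s True" "gv s True (p ! i) \<le> segment_cost w p 0 i" by auto
  moreover have "p ! Suc i \<in> succs E True (p ! i)"
    using is_path_edge[OF p Suc.prems(1)] by (simp add: succs_def)
  ultimately show ?case
    using relaxed by (fastforce simp: closed_relaxed_def ecost_def segment_cost_Suc_right)
qed

lemma backward_suffix_bound:
  assumes relaxed: "closed_relaxed s" and roots: "roots_generated s"
    and p: "is_path E x p goal" and "i < length p"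
    and "\<forall>l. i < l \<and> l < length p \<longrightarrow> p ! l \<in> cls s False"
  shows "p ! i \<in> generated s False \<and> gv s False (p ! i) \<le> segment_cost w p i (length p - 1)"
proof -
  have "i \<le> length p - 1" using assms(4) by simp
  then show ?thesis using assms(5)
  proof (induction i rule: inc_induct)
    case base
    have "p ! (length p - 1) = goal" using p by (metis is_path_def last_conv_nth)
    then show ?case
      using roots[unfolded roots_generated_def, THEN spec, of False]
      by (simp add: root_def segment_cost_def)
  next
    case (step i)
    then have "p ! Suc i \<in> cls s False" "gv s False (p ! Suc i) \<le> segment_cost w p (Suc i) (length p - 1)"
      by auto
    moreover have "p ! i \<in> succs E False (p ! Suc i)"
      using is_path_edge[OF p] step.hyps by (simp add: succs_def)
    ultimately show ?case
      using relaxed step.hyps by (fastforce simp: closed_relaxed_def ecost_def segment_cost_Suc_left)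
  qed
qed

lemma ub_le_path_cost_at_meeting:
  assumes inv: "invariant s" and p: "is_path E start p goal" and j: "j < length p"
    and fwd_closed: "\<forall>l<j. p ! l \<in> cls s True"
    and bwd_closed: "\<forall>l. j < l \<and> l < length p \<longrightarrow> p ! l \<in> cls s False"
  shows "ub s \<le> ereal (path_cost w p)"
proof -
  from inv have relaxed: "closed_relaxed s" and roots: "roots_generated s"
    and meet: "ub_le_meetings s"
    by (simp_all add: invariant_def)
  have fwd: "p ! j \<in> generated s True" "gv s True (p ! j) \<le> segment_cost w p 0 j"
    using forward_prefix_bound[OF relaxed roots p j fwd_closed] by auto
  have bwd: "p ! j \<in> generated s False" "gv s False (p ! j) \<le> segment_cost w p j (length p - 1)"
    using backward_suffix_bound[OF relaxed roots p j bwd_closed] by auto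
  have j_le: "j \<le> length p - 1" using j by simp
  have "ub s \<le> ereal (gv s True (p ! j) + gv s False (p ! j))"
    using meet fwd(1) bwd(1) unfolding ub_le_meetings_def by (metis IntI not_True_eq_False)
  also have "\<dots> \<le> ereal (path_cost w p)"
    using fwd(2) bwd(2) segment_cost_concat[of 0 j "length p - 1" w p] j_le
    by (simp add: path_cost_eq_segment_cost)
  finally show ?thesis .
qed

lemma LB_le_W_path_cost_at_open_pair:
  assumes inv: "invariant s" and p: "is_path E start p goal"
    and W: "1 \<le> W" and lam: "lam \<le> W" and jk: "j < k" "k < length p"
    and fwd_closed: "\<forall>l<j. p ! l \<in> cls s True" and j_not_closed: "p ! j \<notin> cls s True"
    and bwd_closed: "\<forall>l. k < l \<and> l < length p \<longrightarrow> p ! l \<in> cls s False"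
    and k_not_closed: "p ! k \<notin> cls s False"
  shows "LB hF hB W lam s \<le> ereal (W * path_cost w p)"
proof -
  let ?N = "length p - 1"
  from inv have relaxed: "closed_relaxed s" and roots: "roots_generated s"
    and g_h: "g_ge_opposite_h s"
    by (simp_all add: invariant_def)
  have fwd: "p ! j \<in> opn s True" "gv s True (p ! j) \<le> segment_cost w p 0 j"
    using forward_prefix_bound[OF relaxed roots p _ fwd_closed] jk j_not_closed by auto
  have bwd: "p ! k \<in> opn s False" "gv s False (p ! k) \<le> segment_cost w p k ?N"
    using backward_suffix_bound[OF relaxed roots p _ bwd_closed] jk k_not_closed by auto
  have "bW hF hB W lam True s (p ! j) + bW hF hB W lam False s (p ! k)
      \<le> 2 * W * (segment_cost w p 0 j + segment_cost w p j k + segment_cost w p k ?N)"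
    unfolding bW_def hD_def if_True if_False not_True_eq_False not_False_eq_True
  proof (rule priority_sum_le)
    show "hB (p ! j) \<le> gv s True (p ! j)"
      using g_h[unfolded g_ge_opposite_h_def, THEN spec, of True] fwd(1) by (simp add: hD_def)
    show "hF (p ! k) \<le> gv s False (p ! k)"
      using g_h[unfolded g_ge_opposite_h_def, THEN spec, of False] bwd(1) by (simp add: hD_def)
    show "hF (p ! j) \<le> segment_cost w p j k + hF (p ! k)"
      using hF_le_segment_cost[OF p] jk by simp
    show "hB (p ! k) \<le> segment_cost w p j k + hB (p ! j)"
      using hB_le_segment_cost[OF p] jk by simp
  qed (use fwd bwd W lam hF_nonneg hB_nonneg in auto)
  also have "\<dots> = 2 * W * path_cost w p"
    using segment_cost_concat[of 0 j k w p] segment_cost_concat[of 0 k ?N w p] jk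
    by (simp add: path_cost_eq_segment_cost)
  finally have "bW hF hB W lam True s (p ! j) + bW hF hB W lam False s (p ! k)
      \<le> 2 * W * path_cost w p" .
  then show ?thesis
    using LB_le_open_pair[OF fwd(1) bwd(1), of hF hB W lam] by (simp add: order_trans)
qed

lemma ub_le_W_path_cost:
  assumes inv: "invariant s" and stop: "ub s \<le> LB hF hB W lam s"
    and W: "1 \<le> W" and lam: "lam \<le> W" and p: "is_path E start p goal"
  shows "ub s \<le> ereal (W * path_cost w p)"
proof -
  define N where "N = length p - 1"
  have N: "N < length p" using p by (simp add: N_def is_path_def)
  obtain j where j: "j \<le> N" "\<forall>l<j. p ! l \<in> cls s True" "j = N \<or> p ! j \<notin> cls s True"
    using ex_least_nat_le[of "\<lambda>j. j = N \<or> p ! j \<notin> cls s True" N] by auto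
  obtain k where
    k: "k \<le> N" "\<forall>l. k < l \<and> l \<le> N \<longrightarrow> p ! l \<in> cls s False" "k = 0 \<or> p ! k \<notin> cls s False"
    using ex_greatest_nat_le[of "\<lambda>k. k = 0 \<or> p ! k \<notin> cls s False" N] by auto
  have bwd_closed: "\<forall>l. k < l \<and> l < length p \<longrightarrow> p ! l \<in> cls s False"
    using k(2) by (auto simp: N_def)
  show ?thesis
  proof (cases "k \<le> j")
    case True
    then have "ub s \<le> ereal (path_cost w p)"
      using ub_le_path_cost_at_meeting[OF inv p _ j(2)] j(1) N bwd_closed by auto
    also have "\<dots> \<le> ereal (W * path_cost w p)"
      using W path_cost_nonneg[OF p] mult_right_mono[of 1 W] by simp
    finally show ?thesis .
  next
    case False
    then have "p ! j \<notin> cls s True" "p ! k \<notin> cls s False"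
      using j(3) k(1,3) by auto
    then have "LB hF hB W lam s \<le> ereal (W * path_cost w p)"
      using LB_le_W_path_cost_at_open_pair[OF inv p W lam _ _ j(2) _ bwd_closed] False k(1) N
      by simp
    with stop show ?thesis by (rule order_trans)
  qed
qed

theorem wbae_bounded_suboptimal:
  assumes run: "(wbae_step E w hF hB W lam)\<^sup>*\<^sup>* (init start goal) s"
    and stop: "ub s \<le> LB hF hB W lam s" and W: "1 \<le> W" and lam: "lam \<le> W"
  shows "ub s \<le> ereal W * cheapest E w start goal"
proof -
  have W_pos: "0 < ereal W" "ereal W \<noteq> \<infinity>" using W by simp_all
  have "ub s / ereal W \<le> cheapest E w start goal"
    unfolding cheapest_def
  proof (rule Inf_greatest)
    fix c assume "c \<in> {ereal (path_cost w p) | p. is_path E start p goal}"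
    then obtain p where p: "is_path E start p goal" and c: "c = ereal (path_cost w p)" by blast
    have "ub s \<le> ereal W * c"
      using ub_le_W_path_cost[OF invariant_reachable[OF run] stop W lam p] c by simp
    then show "ub s / ereal W \<le> c" using ereal_divide_le_pos[OF W_pos] by blast
  qed
  then show ?thesis using ereal_divide_le_pos[OF W_pos] by blast
qed

end

theorem theorem2:
  fixes E :: "('v \<times> 'v) set" and w :: "'v \<Rightarrow> 'v \<Rightarrow> real"
    and start goal :: 'v and hF hB :: "'v \<Rightarrow> real" and W lam :: real
    and s :: "'v sstate"
  assumes finE: "finite E"
    and wnn: "\<forall>(x, y) \<in> E. 0 \<le> w x y"
    and hFnn: "\<forall>v. 0 \<le> hF v" and hBnn: "\<forall>v. 0 \<le> hB v"
    and admF: "\<forall>v. ereal (hF v) \<le> cheapest E w v goal"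
    and admB: "\<forall>v. ereal (hB v) \<le> cheapest E w start v"
    and consF: "\<forall>x y. ereal (hF x) \<le> cheapest E w x y + ereal (hF y)"
    and consB: "\<forall>x y. ereal (hB y) \<le> cheapest E w x y + ereal (hB x)"
    and W1: "1 \<le> W" and lamW: "lam \<le> W"
    and run: "(wbae_step E w hF hB W lam)\<^sup>*\<^sup>* (init start goal) s"
    and stop: "ub s \<le> LB hF hB W lam s"
    and sol: "ub s \<noteq> \<infinity>"
  shows "ub s \<le> ereal W * cheapest E w start goal"
proof -
  interpret wbae_problem E w hF hB start goal
  proof
    show "0 \<le> w x y" if "(x, y) \<in> E" for x y
      using wnn that by auto
    show "0 \<le> hF v" "0 \<le> hB v" for v
      using hFnn hBnn by auto
    show "hF x \<le> w x y + hF y" if "(x, y) \<in> E" for x y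
      using consF that by (intro edge_le_of_cheapest_le) auto
    show "hB y \<le> w x y + hB x" if "(x, y) \<in> E" for x y
      using consB that by (intro edge_le_of_cheapest_le) auto
    show "hF goal \<le> 0"
      using admF by (intro nonpos_of_le_cheapest_self) auto
    show "hB start \<le> 0"
      using admB by (intro nonpos_of_le_cheapest_self) auto
  qed
  show ?thesis
    using run stop W1 lamW by (rule wbae_bounded_suboptimal)
qed

end
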